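(* Let $f\in C^2(\mathbb T,\mathbb R)$ be non-degenerate. Then $$\mathcal H^0(\{f=0\})=-\frac12\int_0^{2\pi}\big(f''(x)f(x)-f'(x)^2\big)\frac{|f(x)|}{\eta_f(x)^3}\,dx .$$
   Context: $\mathbb T=\mathbb R/2\pi\mathbb Z$, functions on $\mathbb T$ are identified with $2\pi$-periodic functions on $\mathbb R$, and $\mathcal H^0(\{f=0\})$ is the number of zeros of $f$ in one period $[0,2\pi)$. Set $\eta_f(x):=\sqrt{f(x)^2+f'(x)^2}$; $f$ is non-degenerate if $\min_x\eta_f(x)>0$. *)

theory Defs
  imports "HOL-Analysis.Analysis"
begin

text \<open>Functions on the circle T = R/2piZ are identified with 2pi-periodic functions on R.\<close>
definition periodic_2pi :: "(real \<Rightarrow> real) \<Rightarrow> bool" where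
  "periodic_2pi f \<longleftrightarrow> (\<forall>x. f (x + 2 * pi) = f x)"

definition C2 :: "(real \<Rightarrow> real) \<Rightarrow> bool" where
  "C2 f \<longleftrightarrow> (\<forall>x. f differentiable (at x)) \<and> (\<forall>x. deriv f differentiable (at x))
             \<and> continuous_on UNIV (deriv (deriv f))"

definition eta :: "(real \<Rightarrow> real) \<Rightarrow> real \<Rightarrow> real" where
  "eta f x = sqrt ((f x)\<^sup>2 + (deriv f x)\<^sup>2)"

definition nondegenerate :: "(real \<Rightarrow> real) \<Rightarrow> bool" where
  "nondegenerate f \<longleftrightarrow> (\<exists>m>0. \<forall>x. eta f x \<ge> m)"

definition num_zeros :: "(real \<Rightarrow> real) \<Rightarrow> nat" where
  "num_zeros f = card {x \<in> {0..<2 * pi}. f x = 0}"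

end

theory Submission
  imports Defs
begin

(* On an interval where f has constant sign s, the function s f'/eta_f is an antiderivative
   of the integrand, because (f'/eta_f)' = f (f'' f - f'^2) / eta_f^3.  At a zero z we have
   eta_f z = |f' z|, and between consecutive zeros a < b the sign of s f' is + at a and - at b,
   so the integral over [a, b] is -1 - 1 = -2.  Shifting the period window to start at a zero
   and summing over the zeros gives -2 times their number; without zeros the integral over a
   period vanishes by periodicity. *)

lemma deriv_periodic:
  fixes g :: "real \<Rightarrow> real"
  assumes "\<And>x. g (x + p) = g x"
  shows "deriv g (x + p) = deriv g x"
  unfolding deriv_def DERIV_shift assms ..

lemma connected_nonvanishing_sign:
  fixes g :: "real \<Rightarrow> real"
  assumes "connected S" "continuous_on S g" "\<And>x. x \<in> S \<Longrightarrow> g x \<noteq> 0"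
  shows "(\<forall>x\<in>S. 0 < g x) \<or> (\<forall>x\<in>S. g x < 0)"
proof (rule ccontr)
  assume "\<not> ?thesis"
  then obtain u v where "u \<in> S" "v \<in> S" "g u \<le> 0" "0 \<le> g v"
    by (meson linorder_not_le)
  then have "0 \<in> g ` S"
    using connected_ivt_hyperplane[OF connected_continuous_image[OF assms(2,1)], of "g u" "g v" 1 0]
    by auto
  then show False
    using assms(3) by auto
qed

lemma DERIV_nonneg_if_min_at_left:
  fixes g :: "real \<Rightarrow> real"
  assumes "(g has_real_derivative l) (at a)" "a < b" "\<And>x. x \<in> {a<..<b} \<Longrightarrow> g a \<le> g x"
  shows "0 \<le> l"
proof (rule ccontr)
  assume "\<not> 0 \<le> l"
  then obtain d where "0 < d" and dec: "\<And>h. 0 < h \<Longrightarrow> h < d \<Longrightarrow> g (a + h) < g a"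
    using DERIV_neg_dec_right[OF assms(1)] by force
  define h where "h = min d (b - a) / 2"
  have "0 < h" "h < d" "a + h \<in> {a<..<b}"
    using \<open>0 < d\<close> assms(2) by (auto simp: h_def min_def field_simps)
  then show False using dec assms(3) by force
qed

lemma DERIV_nonpos_if_min_at_right:
  fixes g :: "real \<Rightarrow> real"
  assumes "(g has_real_derivative l) (at b)" "a < b" "\<And>x. x \<in> {a<..<b} \<Longrightarrow> g b \<le> g x"
  shows "l \<le> 0"
proof (rule ccontr)
  assume "\<not> l \<le> 0"
  then obtain d where "0 < d" and inc: "\<And>h. 0 < h \<Longrightarrow> h < d \<Longrightarrow> g (b - h) < g b"
    using DERIV_pos_inc_left[OF assms(1)] by force
  define h where "h = min d (b - a) / 2"
  have "0 < h" "h < d" "b - h \<in> {a<..<b}"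
    using \<open>0 < d\<close> assms(2) by (auto simp: h_def min_def field_simps)
  then show False using inc assms(3) by force
qed

lemma card_periodic_window:
  fixes P :: "real \<Rightarrow> bool"
  assumes "\<And>x. P (x + p) = P x" "0 \<le> c" "c \<le> p"
  shows "card {x \<in> {c..<c + p}. P x} = card {x \<in> {0..<p}. P x}"
proof -
  have P_diff: "P (x - p) = P x" for x
    using assms(1)[of "x - p"] by simp
  have "bij_betw (\<lambda>x. if x < p then x else x - p) {x \<in> {c..<c + p}. P x} {x \<in> {0..<p}. P x}"
    by (rule bij_betw_byWitness[where f' = "\<lambda>y. if c \<le> y then y else y + p"])
      (use assms(2,3) in \<open>auto simp: P_diff assms(1)\<close>)
  then show ?thesis by (rule bij_betw_same_card)
qed

lemma has_integral_periodic_shift: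
  fixes g :: "real \<Rightarrow> 'a::banach"
  assumes "\<And>x. g (x + p) = g x" "0 \<le> c" "c \<le> p" "(g has_integral v) {c..c + p}"
  shows "(g has_integral v) {0..p}"
proof -
  have "g integrable_on {c..p}" "g integrable_on {p..c + p}"
    using assms(2-4) by (auto intro: integrable_subinterval_real)
  then obtain v1 v2 where v1: "(g has_integral v1) {c..p}" and v2: "(g has_integral v2) {p..c + p}"
    by blast
  have "(g has_integral v1 + v2) {c..c + p}"
    using has_integral_combine[OF _ _ v1 v2] assms(2,3) by simp
  then have "v = v1 + v2"
    using assms(4) has_integral_unique by blast
  have "((\<lambda>x. g (1 *\<^sub>R x + p)) has_integral v2 /\<^sub>R 1 ^ DIM(real))
      (cbox ((p - p) /\<^sub>R 1) ((c + p - p) /\<^sub>R 1))"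
    by (rule has_integral_affinity'[of g v2 p "c + p" 1 p]) (use v2 in auto)
  then have "(g has_integral v2) {0..c}"
    by (simp add: assms(1))
  then have "(g has_integral v2 + v1) {0..p}"
    using has_integral_combine[OF _ _ _ v1] assms(2,3) by simp
  then show ?thesis using \<open>v = v1 + v2\<close> by (simp add: add.commute)
qed

(* Continuity of f'' is not assumed: the Henstock-Kurzweil fundamental theorem of calculus
   needs only an antiderivative that is differentiable in the interior. *)
locale simple_zeros =
  fixes f :: "real \<Rightarrow> real"
  assumes differentiable: "f differentiable (at x)"
    and deriv_differentiable: "deriv f differentiable (at x)"
    and simple: "f x = 0 \<Longrightarrow> deriv f x \<noteq> 0"
begin

definition zero_density :: "real \<Rightarrow> real" where
  "zero_density x = (deriv (deriv f) x * f x - (deriv f x)\<^sup>2) * \<bar>f x\<bar> / (eta f x) ^ 3"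

lemma f_has_real_derivative: "(f has_real_derivative deriv f x) (at x)"
  using differentiable by (simp add: DERIV_deriv_iff_real_differentiable)

lemma deriv_f_has_real_derivative: "(deriv f has_real_derivative deriv (deriv f) x) (at x)"
  using deriv_differentiable by (simp add: DERIV_deriv_iff_real_differentiable)

lemma continuous_on_f: "continuous_on S f"
  by (meson f_has_real_derivative DERIV_isCont continuous_at_imp_continuous_on)

lemma continuous_on_deriv: "continuous_on S (deriv f)"
  by (meson deriv_f_has_real_derivative DERIV_isCont continuous_at_imp_continuous_on)

lemma eta_pos: "0 < eta f x"
  using simple[of x] by (auto simp: eta_def sum_power2_gt_zero_iff)

lemma has_real_derivative_eta:
  "(eta f has_real_derivative (f x * deriv f x + deriv f x * deriv (deriv f) x) / eta f x) (at x)"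
proof -
  have q: "0 < (f x)\<^sup>2 + (deriv f x)\<^sup>2"
    using eta_pos[of x] by (simp add: eta_def)
  have "((\<lambda>x. (f x)\<^sup>2 + (deriv f x)\<^sup>2) has_real_derivative
      2 * (f x * deriv f x + deriv f x * deriv (deriv f) x)) (at x)"
    by (auto intro!: derivative_eq_intros f_has_real_derivative deriv_f_has_real_derivative
        simp: algebra_simps)
  from DERIV_chain2[OF DERIV_real_sqrt[OF q] this] show ?thesis
    unfolding eta_def[abs_def] by (rule DERIV_cong) (simp add: divide_simps)
qed

lemma has_real_derivative_deriv_over_eta:
  "((\<lambda>x. deriv f x / eta f x) has_real_derivative
     f x * (deriv (deriv f) x * f x - (deriv f x)\<^sup>2) / (eta f x) ^ 3) (at x)"
proof -
  have e: "0 < eta f x" "(eta f x)\<^sup>2 = (f x)\<^sup>2 + (deriv f x)\<^sup>2"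
    using eta_pos[of x] by (auto simp: eta_def)
  have quotient: "((\<lambda>x. deriv f x / eta f x) has_real_derivative
      (deriv (deriv f) x * eta f x
        - deriv f x * ((f x * deriv f x + deriv f x * deriv (deriv f) x) / eta f x))
      / (eta f x * eta f x)) (at x)"
    using e(1) by (intro DERIV_divide deriv_f_has_real_derivative has_real_derivative_eta) simp
  have "(deriv (deriv f) x * eta f x
        - deriv f x * ((f x * deriv f x + deriv f x * deriv (deriv f) x) / eta f x))
      / (eta f x * eta f x)
      = (deriv (deriv f) x * (eta f x)\<^sup>2
          - deriv f x * (f x * deriv f x + deriv f x * deriv (deriv f) x)) / (eta f x) ^ 3"
    using e(1) by (simp add: field_simps power2_eq_square power3_eq_cube)
  also have "\<dots> = f x * (deriv (deriv f) x * f x - (deriv f x)\<^sup>2) / (eta f x) ^ 3"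
    unfolding e(2) by (simp add: algebra_simps power2_eq_square)
  finally show ?thesis
    by (rule DERIV_cong[OF quotient])
qed

lemma continuous_on_eta: "continuous_on S (eta f)"
  by (meson has_real_derivative_eta DERIV_isCont continuous_at_imp_continuous_on)

lemma sign_on_zero_free_interval:
  assumes "\<And>x. x \<in> {a<..<b} \<Longrightarrow> f x \<noteq> 0"
  obtains s :: real where "\<bar>s\<bar> = 1" "\<And>x. x \<in> {a<..<b} \<Longrightarrow> 0 < s * f x"
proof -
  have "(\<forall>x\<in>{a<..<b}. 0 < f x) \<or> (\<forall>x\<in>{a<..<b}. f x < 0)"
    by (rule connected_nonvanishing_sign[OF connected_Ioo continuous_on_f assms])
  then show ?thesis
    using that[of 1] that[of "-1"] by auto
qed

lemma has_integral_zero_density_zero_free: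
  assumes "a \<le> b" "\<bar>s\<bar> = 1" "\<And>x. x \<in> {a<..<b} \<Longrightarrow> 0 < s * f x"
  shows "(zero_density has_integral s * (deriv f b / eta f b - deriv f a / eta f a)) {a..b}"
proof -
  have "(zero_density has_integral s * (deriv f b / eta f b) - s * (deriv f a / eta f a)) {a..b}"
  proof (rule fundamental_theorem_of_calculus_interior[OF assms(1)])
    show "continuous_on {a..b} (\<lambda>x. s * (deriv f x / eta f x))"
      using eta_pos
      by (intro continuous_intros continuous_on_deriv continuous_on_eta) (simp add: less_imp_neq[symmetric])
  next
    fix x assume x: "x \<in> {a<..<b}"
    have "\<bar>f x\<bar> = \<bar>s * f x\<bar>"
      using assms(2) by (simp add: abs_mult)
    also have "\<dots> = s * f x"
      using assms(3)[OF x] by simp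
    finally have
      "s * (f x * (deriv (deriv f) x * f x - (deriv f x)\<^sup>2) / (eta f x) ^ 3) = zero_density x"
      by (simp add: zero_density_def algebra_simps)
    then show "((\<lambda>x. s * (deriv f x / eta f x)) has_vector_derivative zero_density x) (at x)"
      using DERIV_cmult[OF has_real_derivative_deriv_over_eta, of s x]
      by (simp add: has_real_derivative_iff_has_vector_derivative)
  qed
  then show ?thesis by (simp add: right_diff_distrib)
qed

lemma has_integral_zero_density_consecutive_zeros:
  assumes "a < b" "f a = 0" "f b = 0" "\<And>x. x \<in> {a<..<b} \<Longrightarrow> f x \<noteq> 0"
  shows "(zero_density has_integral -2) {a..b}"
proof -
  obtain s where s: "\<bar>s\<bar> = 1" "\<And>x. x \<in> {a<..<b} \<Longrightarrow> 0 < s * f x"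
    using sign_on_zero_free_interval assms(4) by blast
  have sgn_end: "s * (deriv f z / eta f z) = sgn (s * deriv f z)" if "f z = 0" for z
    using that s(1) by (simp add: eta_def real_sgn_eq abs_mult)
  have nonzero: "s * deriv f z \<noteq> 0" if "f z = 0" for z
    using simple[OF that] s(1) by auto
  have sf: "((\<lambda>x. s * f x) has_real_derivative s * deriv f z) (at z)" for z
    by (intro DERIV_cmult f_has_real_derivative)
  have "0 \<le> s * deriv f a"
    by (rule DERIV_nonneg_if_min_at_left[OF sf assms(1)]) (use s(2) assms(2) in force)
  then have "0 < s * deriv f a"
    using nonzero[OF assms(2)] by linarith
  moreover have "s * deriv f b \<le> 0"
    by (rule DERIV_nonpos_if_min_at_right[OF sf assms(1)]) (use s(2) assms(3) in force)
  then have "s * deriv f b < 0"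
    using nonzero[OF assms(3)] by linarith
  ultimately have "s * (deriv f b / eta f b - deriv f a / eta f a) = -2"
    by (simp only: right_diff_distrib sgn_end[OF assms(2)] sgn_end[OF assms(3)]) simp
  then show ?thesis
    using has_integral_zero_density_zero_free[OF less_imp_le[OF assms(1)] s] by simp
qed

lemma not_islimpt_zeros: "\<not> x islimpt {y. f y = 0}"
proof
  assume lim: "x islimpt {y. f y = 0}"
  have "closed {y. f y = 0}"
    by (rule closed_Collect_eq[OF continuous_on_f continuous_on_const])
  with lim have "f x = 0"
    using closed_limpt by blast
  have "((\<lambda>y. (f y - f x) / (y - x)) \<longlongrightarrow> deriv f x) (at x)"
    using f_has_real_derivative[of x] unfolding has_field_derivative_iff .
  then have "eventually (\<lambda>y. (f y - f x) / (y - x) \<noteq> 0) (at x)"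
    using tendsto_imp_eventually_ne simple[OF \<open>f x = 0\<close>] by blast
  then have "eventually (\<lambda>y. y \<notin> {y. f y = 0}) (at x)"
    by (rule eventually_mono) (auto simp: \<open>f x = 0\<close>)
  with lim show False
    by (simp add: islimpt_iff_eventually)
qed

lemma finite_zeros:
  assumes "compact S"
  shows "finite {x \<in> S. f x = 0}"
proof (rule ccontr)
  assume "infinite {x \<in> S. f x = 0}"
  then obtain x where "x islimpt {x \<in> S. f x = 0}"
    using Heine_Borel_imp_Bolzano_Weierstrass[OF assms] by blast
  then have "x islimpt {y. f y = 0}"
    by (rule islimpt_subset) auto
  with not_islimpt_zeros show False ..
qed

lemma has_integral_zero_density_between_zeros:
  assumes "a < b" "f a = 0" "f b = 0"
  shows "(zero_density has_integral -2 * real (card {x \<in> {a..<b}. f x = 0})) {a..b}"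
proof -
  let ?Z = "\<lambda>u v. {x \<in> {u..<v}. f x = 0}"
  have fin: "finite (?Z u v)" for u v
    by (rule finite_subset[OF _ finite_zeros[OF compact_Icc[of u v]]]) auto
  have "(zero_density has_integral -2 * real n) {a..b}"
    if "a < b" "f a = 0" "f b = 0" "card (?Z a b) = n" for n a b
    using that
  proof (induction n arbitrary: a b rule: less_induct)
    case (less n)
    show ?case
    proof (cases "\<exists>c\<in>{a<..<b}. f c = 0")
      case False
      then have "?Z a b = {a}"
        using less.prems by force
      then show ?thesis
        using has_integral_zero_density_consecutive_zeros[of a b] less.prems False by auto
    next
      case True
      then obtain c where c: "a < c" "c < b" "f c = 0"
        by auto
      have "?Z a b = ?Z a c \<union> ?Z c b" "?Z a c \<inter> ?Z c b = {}"
        using c by auto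
      then have n: "n = card (?Z a c) + card (?Z c b)"
        using less.prems(4) fin by (simp add: card_Un_disjoint)
      have "a \<in> ?Z a c" "c \<in> ?Z c b"
        using c less.prems by auto
      then have "0 < card (?Z a c)" "0 < card (?Z c b)"
        using fin by (auto simp: card_gt_0_iff)
      then have "(zero_density has_integral -2 * real (card (?Z a c))) {a..c}"
        and "(zero_density has_integral -2 * real (card (?Z c b))) {c..b}"
        using less.IH n c less.prems by auto
      then have "(zero_density has_integral
          -2 * real (card (?Z a c)) + -2 * real (card (?Z c b))) {a..b}"
        using c by (intro has_integral_combine[of a c b]) auto
      then show ?thesis
        by (simp add: n algebra_simps)
    qed
  qed
  then show ?thesis using assms by blast
qed

end

locale periodic_simple_zeros = simple_zeros +
  fixes p :: real
  assumes period_pos: "0 < p"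
    and periodic: "f (x + p) = f x"
begin

lemma zero_density_periodic: "zero_density (x + p) = zero_density x"
proof -
  have "deriv f (x + p) = deriv f x" for x
    by (rule deriv_periodic) (rule periodic)
  moreover from this have "deriv (deriv f) (x + p) = deriv (deriv f) x" for x
    by (rule deriv_periodic)
  ultimately show ?thesis
    by (simp add: zero_density_def eta_def periodic)
qed

lemma has_integral_zero_density_period:
  "(zero_density has_integral -2 * real (card {x \<in> {0..<p}. f x = 0})) {0..p}"
proof (cases "\<exists>z\<in>{0..<p}. f z = 0")
  case True
  then obtain z where z: "0 \<le> z" "z < p" "f z = 0"
    by auto
  have "(zero_density has_integral -2 * real (card {x \<in> {z..<z + p}. f x = 0})) {z..z + p}"
    using has_integral_zero_density_between_zeros[of z "z + p"] period_pos z periodic by simp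
  then show ?thesis
    using card_periodic_window[of "\<lambda>x. f x = 0" p z]
      has_integral_periodic_shift[of zero_density p z, OF zero_density_periodic] periodic z
    by simp
next
  case False
  then have no_zeros: "{x \<in> {0..<p}. f x = 0} = {}"
    by auto
  then have "\<And>x. x \<in> {0<..<p} \<Longrightarrow> f x \<noteq> 0"
    by auto
  then obtain s where s: "\<bar>s\<bar> = 1" "\<And>x. x \<in> {0<..<p} \<Longrightarrow> 0 < s * f x"
    using sign_on_zero_free_interval by blast
  have "deriv f (0 + p) / eta f (0 + p) = deriv f 0 / eta f 0"
    by (simp only: deriv_periodic[of f, OF periodic] eta_def periodic)
  then show ?thesis
    unfolding no_zeros
    using has_integral_zero_density_zero_free[OF less_imp_le[OF period_pos] s] by simp
qed

end

theorem proposition1: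
  fixes f :: "real \<Rightarrow> real"
  assumes "periodic_2pi f" and "C2 f" and "nondegenerate f"
  shows "real (num_zeros f) =
    - (1/2) * integral {0..2 * pi}
        (\<lambda>x. (deriv (deriv f) x * f x - (deriv f x)\<^sup>2) * \<bar>f x\<bar> / (eta f x) ^ 3)"
proof -
  interpret periodic_simple_zeros f "2 * pi"
  proof
    show "f differentiable (at x)" "deriv f differentiable (at x)" for x
      using \<open>C2 f\<close> by (auto simp: C2_def)
    show "f (x + 2 * pi) = f x" for x
      using \<open>periodic_2pi f\<close> by (simp add: periodic_2pi_def)
    show "deriv f x \<noteq> 0" if "f x = 0" for x
    proof -
      obtain m where "0 < m" "\<And>x. m \<le> eta f x"
        using \<open>nondegenerate f\<close> by (auto simp: nondegenerate_def)
      then have "0 < eta f x"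
        by (meson less_le_trans)
      with that show ?thesis
        by (simp add: eta_def)
    qed
  qed simp
  show ?thesis
    using integral_unique[OF has_integral_zero_density_period]
    by (simp add: num_zeros_def zero_density_def[abs_def])
qed

end
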